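(* Let $N\ge2$ and $\gamma^1,\dots,\gamma^N>0$ with $\gamma^N=\max\{\gamma^1,\dots,\gamma^N\}$, and let $$\Gamma:=\mathrm{diag}\{\gamma^1,\dots,\gamma^{N-1}\}-\tfrac1N\mathbb 1_{N-1}\mathbb 1_{N-1}^\top\mathrm{diag}\{\gamma^1-\gamma^N,\dots,\gamma^{N-1}-\gamma^N\}\in\mathbb R^{(N-1)\times(N-1)}.$$ Then $\Gamma$ is positive definite, i.e. $b^\top\Gamma b>0$ for all $b\in\mathbb R^{N-1}\setminus\{0\}$, and $\Gamma$ has only positive eigenvalues.
   Context: $\mathbb 1_{N-1}$ is the all-ones vector in $\mathbb R^{N-1}$. Positive definiteness here does not require symmetry ($\Gamma$ is in general not symmetric). *)

theory Defs
  imports "HOL-Analysis.Analysis"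
begin

text \<open>The (N-1)x(N-1) matrix Gamma, indexed by a finite type 'n with CARD('n) = N - 1.
  g gives gamma^1..gamma^(N-1), gN is gamma^N, and N = CARD('n) + 1.\<close>
definition Gamma_mat :: "real^'n::finite \<Rightarrow> real \<Rightarrow> real^'n^'n" where
  "Gamma_mat g gN =
     (\<chi> i j. (if i = j then g $ i else 0)
             - (1 / real (CARD('n) + 1)) * (g $ j - gN))"

definition cmat :: "real^'n^'m \<Rightarrow> complex^'n^'m" where
  "cmat A = (\<chi> i j. complex_of_real (A $ i $ j))"

end

theory Submission
  imports Defs
begin

text \<open>
  Write \<Gamma> = diag(\<gamma>) + c 1 w^T with c = 1/N and w_j = \<gamma>^N - \<gamma>^j \<ge> 0.
  Completing the square, b^T \<Gamma> b = \<Sum>_i \<gamma>^i (b_i - c s/2)^2 + c s^2 (\<gamma>^N - c \<Sum>_i \<gamma>^i / 4)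
  with s = \<Sum>_i b_i; since c \<Sum>_i \<gamma>^i < 4 \<gamma>^N, both terms are nonnegative and not both zero.
  Positive definiteness of a real, not necessarily symmetric, matrix forces Re \<mu> > 0 for every
  complex eigenvalue \<mu>: take real parts in v^* \<Gamma> v = \<mu> |v|^2. The eigenvalues are real because
  diag(w) \<Gamma> is symmetric: weighting the eigen-equation by w gives \<mu> v^* diag(w) v = v^* diag(w) \<Gamma> v,
  a real number; and if v^* diag(w) v = 0, the rank-one part vanishes on v, so \<mu> = \<gamma>^k for some k.
\<close>

definition diag_plus_rank_one :: "real^'n::finite \<Rightarrow> real \<Rightarrow> real^'n \<Rightarrow> real^'n^'n" where
  "diag_plus_rank_one d c w = (\<chi> i j. (if i = j then d $ i else 0) + c * w $ j)"

lemma Gamma_mat_eq_diag_plus_rank_one: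
  "Gamma_mat g gN = diag_plus_rank_one g (1 / real (CARD('n) + 1)) (\<chi> j. gN - g $ j)"
  for g :: "real^'n::finite"
  unfolding Gamma_mat_def diag_plus_rank_one_def by (simp add: vec_eq_iff diff_divide_distrib)

lemma diag_plus_rank_one_mult_vec:
  "(diag_plus_rank_one d c w *v b) $ i = d $ i * b $ i + c * (\<Sum>j\<in>UNIV. w $ j * b $ j)"
  unfolding diag_plus_rank_one_def matrix_vector_mult_def
  by (simp add: ring_distribs sum.distrib sum_distrib_left mult_ac if_distrib[of "\<lambda>x. _ * x"] cong: if_cong)

lemma cmat_diag_plus_rank_one_mult_vec:
  "(cmat (diag_plus_rank_one d c w) *v v) $ i
     = of_real (d $ i) * v $ i + of_real c * (\<Sum>j\<in>UNIV. of_real (w $ j) * v $ j)"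
  unfolding diag_plus_rank_one_def cmat_def matrix_vector_mult_def
  by (simp add: ring_distribs sum.distrib sum_distrib_left mult_ac if_distrib[of "\<lambda>x. _ * x"]
      if_distrib[of complex_of_real] cong: if_cong)

lemma quadratic_form_diag_plus_rank_one:
  "b \<bullet> (diag_plus_rank_one d c w *v b)
     = (\<Sum>i\<in>UNIV. d $ i * (b $ i)\<^sup>2) + c * (\<Sum>i\<in>UNIV. b $ i) * (\<Sum>j\<in>UNIV. w $ j * b $ j)"
proof -
  have "b \<bullet> (diag_plus_rank_one d c w *v b)
      = (\<Sum>i\<in>UNIV. d $ i * (b $ i)\<^sup>2 + b $ i * (c * (\<Sum>j\<in>UNIV. w $ j * b $ j)))"
    by (simp add: inner_vec_def diag_plus_rank_one_mult_vec ring_distribs power2_eq_square mult_ac)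
  also have "\<dots> = (\<Sum>i\<in>UNIV. d $ i * (b $ i)\<^sup>2) + (\<Sum>i\<in>UNIV. b $ i) * (c * (\<Sum>j\<in>UNIV. w $ j * b $ j))"
    by (simp only: sum.distrib sum_distrib_right)
  finally show ?thesis
    by (simp only: mult_ac)
qed

lemma diag_plus_rank_one_pos_def:
  fixes d b :: "real^'n::finite"
  assumes d_pos: "\<And>i. d $ i > 0" and c_nonneg: "c \<ge> 0"
    and small: "c * (\<Sum>i\<in>UNIV. d $ i) < 4 * m" and "b \<noteq> 0"
  shows "b \<bullet> (diag_plus_rank_one d c (\<chi> j. m - d $ j) *v b) > 0"
proof -
  define s where "s = (\<Sum>i\<in>UNIV. b $ i)"
  define \<kappa> where "\<kappa> = m - c / 4 * (\<Sum>i\<in>UNIV. d $ i)"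
  have \<kappa>_pos: "\<kappa> > 0"
    using small by (simp add: \<kappa>_def)
  have "b \<bullet> (diag_plus_rank_one d c (\<chi> j. m - d $ j) *v b)
      = (\<Sum>i\<in>UNIV. d $ i * (b $ i)\<^sup>2) + c * s * (\<Sum>j\<in>UNIV. (m - d $ j) * b $ j)"
    by (simp add: quadratic_form_diag_plus_rank_one s_def)
  also have "\<dots> = (\<Sum>i\<in>UNIV. d $ i * (b $ i - c * s / 2)\<^sup>2) + c * \<kappa> * s\<^sup>2"
    by (simp add: \<kappa>_def s_def power2_eq_square algebra_simps sum.distrib sum_subtractf
        sum_distrib_left sum_divide_distrib)
  finally have completed_square: "b \<bullet> (diag_plus_rank_one d c (\<chi> j. m - d $ j) *v b)
      = (\<Sum>i\<in>UNIV. d $ i * (b $ i - c * s / 2)\<^sup>2) + c * \<kappa> * s\<^sup>2" .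
  have d_nonneg: "d $ i \<ge> 0" for i
    using d_pos less_imp_le by blast
  obtain k where "b $ k \<noteq> 0"
    using \<open>b \<noteq> 0\<close> by (auto simp: vec_eq_iff)
  have "(\<Sum>i\<in>UNIV. d $ i * (b $ i - c * s / 2)\<^sup>2) > 0" if "c * s = 0"
    using \<open>b $ k \<noteq> 0\<close> that d_pos d_nonneg by (intro sum_pos2[of UNIV k]) auto
  moreover have "c * \<kappa> * s\<^sup>2 > 0" if "c * s \<noteq> 0"
    using that c_nonneg \<kappa>_pos by simp
  moreover have "(\<Sum>i\<in>UNIV. d $ i * (b $ i - c * s / 2)\<^sup>2) \<ge> 0"
    using d_nonneg by (intro sum_nonneg) simp
  moreover have "c * \<kappa> * s\<^sup>2 \<ge> 0"
    using c_nonneg \<kappa>_pos by simp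
  ultimately show ?thesis
    unfolding completed_square by force
qed

lemma Re_cmat_mult_vec: "Re ((cmat A *v v) $ i) = (A *v (\<chi> j. Re (v $ j))) $ i"
  by (simp add: cmat_def matrix_vector_mult_def Re_sum)

lemma Im_cmat_mult_vec: "Im ((cmat A *v v) $ i) = (A *v (\<chi> j. Im (v $ j))) $ i"
  by (simp add: cmat_def matrix_vector_mult_def Im_sum)

lemma eigenvalue_Re_pos_if_pos_def:
  fixes A :: "real^'n::finite^'n"
  assumes pos_def: "\<And>b. b \<noteq> 0 \<Longrightarrow> b \<bullet> (A *v b) > 0"
    and "v \<noteq> 0" and eigen: "cmat A *v v = mu *s v"
  shows "Re mu > 0"
proof -
  define x where "x = (\<chi> j. Re (v $ j))"
  define y where "y = (\<chi> j. Im (v $ j))"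
  have "x \<noteq> 0 \<or> y \<noteq> 0"
    using \<open>v \<noteq> 0\<close> by (auto simp: x_def y_def vec_eq_iff complex_eq_iff)
  moreover have "b \<bullet> (A *v b) \<ge> 0" for b
    using pos_def[of b] by (cases "b = 0") auto
  ultimately have Re_form_pos: "x \<bullet> (A *v x) + y \<bullet> (A *v y) > 0"
    using pos_def by (metis add_pos_nonneg add_nonneg_pos)
  let ?form = "\<Sum>i\<in>UNIV. cnj (v $ i) * (cmat A *v v) $ i"
  have "Re ?form = x \<bullet> (A *v x) + y \<bullet> (A *v y)"
    by (simp add: Re_sum inner_vec_def sum.distrib Re_cmat_mult_vec Im_cmat_mult_vec x_def y_def)
  moreover have "?form = mu * of_real (v \<bullet> v)"
    by (simp add: eigen inner_vec_def inner_complex_def sum_distrib_left complex_eq_iff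
        Re_sum Im_sum algebra_simps power2_eq_square)
  ultimately have "Re mu * (v \<bullet> v) > 0"
    using Re_form_pos by simp
  moreover have "v \<bullet> v > 0"
    using \<open>v \<noteq> 0\<close> by simp
  ultimately show ?thesis
    by (simp add: zero_less_mult_iff)
qed

lemma diag_plus_rank_one_eigenvalue_real:
  fixes d w :: "real^'n::finite"
  assumes w_nonneg: "\<And>i. w $ i \<ge> 0"
    and "v \<noteq> 0" and eigen: "cmat (diag_plus_rank_one d c w) *v v = mu *s v"
  shows "mu \<in> \<real>"
proof -
  define \<tau> where "\<tau> = (\<Sum>j\<in>UNIV. of_real (w $ j) * v $ j)"
  define K where "K = (\<Sum>i\<in>UNIV. w $ i * (cmod (v $ i))\<^sup>2)"
  define R where "R = (\<Sum>i\<in>UNIV. w $ i * d $ i * (cmod (v $ i))\<^sup>2) + c * (cmod \<tau>)\<^sup>2"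
  have row: "of_real (d $ i) * v $ i + of_real c * \<tau> = mu * v $ i" for i
    using arg_cong[OF eigen, of "\<lambda>u. u $ i"]
    by (simp add: cmat_diag_plus_rank_one_mult_vec \<tau>_def)
  have cnj_mult_self: "cnj z * z = (of_real (cmod z))\<^sup>2" for z
    using complex_norm_square[of z] by (simp add: mult.commute)
  have cnj_\<tau>: "(\<Sum>i\<in>UNIV. of_real (w $ i) * cnj (v $ i)) = cnj \<tau>"
    by (simp add: \<tau>_def cnj_sum)
  have "mu * of_real K = (\<Sum>i\<in>UNIV. of_real (w $ i) * cnj (v $ i) * (mu * v $ i))"
    by (simp add: K_def sum_distrib_left cnj_mult_self[symmetric] mult_ac)
  also have "\<dots> = (\<Sum>i\<in>UNIV. of_real (w $ i) * cnj (v $ i) * (of_real (d $ i) * v $ i + of_real c * \<tau>))"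
    by (simp add: row)
  also have "\<dots> = (\<Sum>i\<in>UNIV. of_real (w $ i * d $ i) * (cnj (v $ i) * v $ i))
      + of_real c * ((\<Sum>i\<in>UNIV. of_real (w $ i) * cnj (v $ i)) * \<tau>)"
    by (simp add: sum.distrib sum_distrib_left sum_distrib_right ring_distribs mult_ac)
  also have "\<dots> = of_real R"
    unfolding cnj_\<tau> cnj_mult_self R_def by simp
  finally have weighted: "mu * of_real K = of_real R" .
  show ?thesis
  proof (cases "K = 0")
    case False
    then have "mu = of_real (R / K)"
      using weighted by (simp add: field_simps)
    then show ?thesis by simp
  next
    case True
    then have "w $ i * (cmod (v $ i))\<^sup>2 = 0" for i
      using w_nonneg unfolding K_def by (subst (asm) sum_nonneg_eq_0_iff) auto
    then have "\<tau> = 0"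
      unfolding \<tau>_def by (intro sum.neutral) auto
    obtain k where "v $ k \<noteq> 0"
      using \<open>v \<noteq> 0\<close> by (auto simp: vec_eq_iff)
    with row[of k] \<open>\<tau> = 0\<close> have "mu = of_real (d $ k)"
      by simp
    then show ?thesis by simp
  qed
qed

theorem lemma7p1:
  fixes g :: "real^'n::finite" and gN :: real
  assumes pos: "\<And>i. g $ i > 0"
    and posN: "gN > 0"
    and maxN: "\<And>i. g $ i \<le> gN"
  shows "(\<forall>b :: real^'n. b \<noteq> 0 \<longrightarrow> b \<bullet> (Gamma_mat g gN *v b) > 0)
       \<and> (\<forall>(mu::complex) (v::complex^'n). v \<noteq> 0 \<and> cmat (Gamma_mat g gN) *v v = mu *s v
            \<longrightarrow> mu \<in> \<real> \<and> Re mu > 0)"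
proof -
  define c where "c = 1 / real (CARD('n) + 1)"
  have Gamma: "Gamma_mat g gN = diag_plus_rank_one g c (\<chi> j. gN - g $ j)"
    unfolding c_def by (rule Gamma_mat_eq_diag_plus_rank_one)
  have "(\<Sum>i\<in>UNIV. g $ i) \<le> real CARD('n) * gN"
    using sum_bounded_above[of UNIV "\<lambda>i. g $ i" gN] maxN by simp
  also have "\<dots> < 4 * (real CARD('n) + 1) * gN"
    using posN by (simp add: algebra_simps add_pos_nonneg)
  finally have "c * (\<Sum>i\<in>UNIV. g $ i) < 4 * gN"
    by (simp add: c_def field_simps)
  then have pos_def: "b \<bullet> (Gamma_mat g gN *v b) > 0" if "b \<noteq> 0" for b
    unfolding Gamma using diag_plus_rank_one_pos_def[OF pos _ _ that] by (simp add: c_def)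
  have "mu \<in> \<real>" if "v \<noteq> 0" "cmat (Gamma_mat g gN) *v v = mu *s v" for mu v
    using that maxN unfolding Gamma by (intro diag_plus_rank_one_eigenvalue_real) auto
  with pos_def eigenvalue_Re_pos_if_pos_def show ?thesis
    by blast
qed

end
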